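(* Fix an integer $k\ge1$. Let $\phi(s)=c_0s+\varphi(s)$ with $c_0\in\mathbb{N}_0$ and $\varphi\in\mathcal{D}_k$, be a non-constant analytic map $\mathbb{C}_0\to\mathbb{C}_0$ such that $C_\phi f=f\circ\phi$ maps $\mathcal{A}_k^+$ into itself. Then $C_\phi:\mathcal{A}_k^+\to\mathcal{A}_k^+$ is an isometry if and only if $\phi(s)=c_0s+i\tau$ with $c_0\in\mathbb{N}=\{1,2,\dots\}$ and $\tau\in\mathbb{R}$.
   Context: $\mathbb{C}_0=\{\operatorname{Re}s>0\}$. $\mathcal{A}^+$ is the Banach algebra of Dirichlet series $f(s)=\sum_{n\ge1}a_nn^{-s}$ with $\|f\|_{\mathcal{A}^+}=\sum|a_n|<\infty$ (pointwise product). $\mathcal{D}$ is the space of analytic functions on $\mathbb{C}_0$ representable by a convergent Dirichlet series for $\operatorname{Re}s$ large. Let $p_1<\dots<p_k$ be the first $k$ primes and $P^+(n)$ the largest prime factor of $n$ ($P^+(1)=1$). $\mathcal{A}_k^+$ is the subalgebra of $f\in\mathcal{A}^+$ with $a_n=0$ unless $P^+(n)\le p_k$ (the Dirichlet expansion only involves $p_1,\dots,p_k$), with the norm of $\mathcal{A}^+$; $\mathcal{D}_k$ is defined similarly as the subspace of $\mathcal{D}$ whose Dirichlet expansions only involve integers $n$ with all prime factors among $p_1,\dots,p_k$. *)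

theory Defs
  imports "HOL-Analysis.Analysis" "HOL-Computational_Algebra.Primes"
begin

definition C0 :: "complex set" where
  "C0 = {s. Re s > 0}"

text \<open>The first k primes p_1 < ... < p_k: a prime p is among them iff
  the number of primes q <= p is at most k.\<close>
definition first_primes :: "nat \<Rightarrow> nat set" where
  "first_primes k = {p. prime p \<and> card {q. prime q \<and> q \<le> p} \<le> k}"

definition smooth :: "nat \<Rightarrow> nat \<Rightarrow> bool" where
  "smooth k n \<longleftrightarrow> n \<ge> 1 \<and> prime_factors n \<subseteq> first_primes k"

text \<open>Dirichlet series with coefficients a (a 0 is never used for smooth support).\<close>
definition dir_term :: "(nat \<Rightarrow> complex) \<Rightarrow> complex \<Rightarrow> nat \<Rightarrow> complex" where
  "dir_term a s n = a n * (of_nat n) powr (- s)"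

definition dir_eval :: "(nat \<Rightarrow> complex) \<Rightarrow> complex \<Rightarrow> complex" where
  "dir_eval a s = (\<Sum>n. dir_term a s n)"

text \<open>Coefficient sequences of elements of A_k^+.\<close>
definition Ak :: "nat \<Rightarrow> (nat \<Rightarrow> complex) set" where
  "Ak k = {a. (\<forall>n. a n \<noteq> 0 \<longrightarrow> smooth k n) \<and> summable (\<lambda>n. norm (a n))}"

definition Anorm :: "(nat \<Rightarrow> complex) \<Rightarrow> real" where
  "Anorm a = (\<Sum>n. norm (a n))"

definition Dk :: "nat \<Rightarrow> (complex \<Rightarrow> complex) set" where
  "Dk k = {f. f holomorphic_on C0 \<and>
     (\<exists>b \<sigma>. (\<forall>n. b n \<noteq> 0 \<longrightarrow> smooth k n) \<and>
        (\<forall>s. Re s > \<sigma> \<longrightarrow> (dir_term b s sums f s)))}"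

definition comp_maps_into :: "nat \<Rightarrow> (complex \<Rightarrow> complex) \<Rightarrow> bool" where
  "comp_maps_into k \<phi> \<longleftrightarrow>
     (\<forall>a\<in>Ak k. \<exists>b\<in>Ak k. \<forall>s\<in>C0. dir_eval a (\<phi> s) = dir_eval b s)"

definition comp_isometry :: "nat \<Rightarrow> (complex \<Rightarrow> complex) \<Rightarrow> bool" where
  "comp_isometry k \<phi> \<longleftrightarrow>
     (\<forall>a\<in>Ak k. \<forall>b\<in>Ak k. (\<forall>s\<in>C0. dir_eval a (\<phi> s) = dir_eval b s) \<longrightarrow> Anorm b = Anorm a)"

end

theory Submission
  imports Defs
begin

text \<open>
  If \<open>\<phi>(s) = c s + i \<tau>\<close> with \<open>c \<ge> 1\<close>, composition sends \<open>\<Sum> a\<^sub>n n^(-s)\<close> to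
  \<open>\<Sum> a\<^sub>n n^(-i \<tau>) (n^c)^(-s)\<close>: it moves the coefficients injectively and rotates them, so it
  preserves the \<open>\<ell>\<^sup>1\<close> norm.

  Conversely, let \<open>\<beta>\<close> be the limit of \<open>\<psi>(\<sigma>)\<close> as \<open>\<sigma> \<rightarrow> \<infinity>\<close>. The image \<open>n^(-\<phi>(s))\<close> of \<open>n^(-s)\<close>
  has its first nonzero coefficient \<open>n^(-\<beta>)\<close> at index \<open>n^c\<^sub>0\<close>. An isometry maps \<open>n^(-s) + l m^(-s)\<close>
  (norm 2) to the sum of the two images for every unimodular \<open>l\<close>, so images of distinct monomials
  have disjoint supports; for \<open>n = 1, m = 2\<close> this forces \<open>c\<^sub>0 \<ge> 1\<close>. Write
  \<open>B(s) = 2^(-\<phi>(s)) = B\<^sub>q q^(-s) + E(s)\<close> with \<open>q = 2^c\<^sub>0\<close>. If \<open>E \<noteq> 0\<close> has its first coefficient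
  at \<open>r > q\<close>, the coefficient of \<open>B^m\<close>, the image of \<open>(2^m)^(-s)\<close>, at index \<open>q^(m-c\<^sub>0) r^c\<^sub>0\<close> is
  \<open>B\<^sub>q^m\<close> times a polynomial in \<open>m\<close> whose top coefficient is a nonzero multiple of \<open>E\<^sub>r^c\<^sub>0\<close>;
  but that index is the first one of the image of \<open>(2^(m-c\<^sub>0) r)^(-s)\<close>, so by disjointness the
  coefficient vanishes for all \<open>m \<ge> c\<^sub>0\<close>, which is impossible. Hence \<open>B = 2^(-\<beta>) q^(-s)\<close>: its norm forces
  \<open>Re \<beta> = 0\<close>, and \<open>(\<psi> - \<beta>) ln 2 / (2 \<pi> i)\<close> is a continuous integer-valued function on the
  half-plane, hence constant, hence 0.
\<close>

section \<open>Dirichlet series with absolutely summable coefficients\<close>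

lemma of_nat_powr_of_real: "(of_nat n :: complex) powr of_real x = of_real (real n powr x)"
  by (metis of_real_of_nat_eq of_nat_0_le_iff powr_of_real)

lemma norm_of_nat_powr: "norm ((of_nat n :: complex) powr s) = real n powr Re s"
  by (simp add: norm_powr_real_powr)

lemma of_nat_powr_nonzero: "n \<noteq> 0 \<Longrightarrow> (of_nat n :: complex) powr s \<noteq> 0"
  by (simp add: powr_def)

lemma of_nat_mult_powr: "(of_nat (a * b) :: complex) powr s = of_nat a powr s * of_nat b powr s"
  by (simp add: powr_times_real)

lemma of_nat_power_powr: "(of_nat (n ^ m) :: complex) powr s = (of_nat n powr s) ^ m"
  by (induction m) (simp_all add: powr_times_real)

lemma of_nat_powr_of_nat_mult:
  "n \<noteq> 0 \<Longrightarrow> (of_nat n :: complex) powr (of_nat c * s) = (of_nat n powr s) ^ c"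
  by (simp add: powr_def exp_of_nat_mult[symmetric] mult_ac)

definition dir_abs_summable :: "(nat \<Rightarrow> complex) \<Rightarrow> bool" where
  "dir_abs_summable a \<longleftrightarrow> summable (\<lambda>n. norm (a n))"

lemma Ak_imp_dir_abs_summable: "a \<in> Ak k \<Longrightarrow> dir_abs_summable a"
  by (simp add: Ak_def dir_abs_summable_def)

lemma Ak_coeff_0: "a \<in> Ak k \<Longrightarrow> a 0 = 0"
  by (auto simp: Ak_def smooth_def)

lemma real_of_nat_powr_le_1: "x \<le> 0 \<Longrightarrow> real n powr x \<le> 1"
proof (cases "n = 0")
  case False
  assume "x \<le> 0"
  then have "real n powr x \<le> real n powr 0" using False by (intro powr_mono) auto
  then show ?thesis using False by simp
qed simp

lemma norm_dir_term_le: "Re s \<ge> 0 \<Longrightarrow> norm (dir_term a s n) \<le> norm (a n)"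
  using real_of_nat_powr_le_1[of "- Re s" n]
  by (simp add: dir_term_def norm_mult norm_of_nat_powr mult_left_le)

lemma dir_abs_summable_weighted:
  assumes "dir_abs_summable a" "\<sigma> \<ge> 0"
  shows "summable (\<lambda>n. norm (a n) * real n powr (-\<sigma>))"
  by (rule summable_comparison_test[of _ "\<lambda>n. norm (a n)"])
    (use assms real_of_nat_powr_le_1[of "-\<sigma>"] in \<open>auto simp: dir_abs_summable_def mult_left_le\<close>)

lemma dir_term_sums:
  assumes "dir_abs_summable a" "Re s \<ge> 0"
  shows "dir_term a s sums dir_eval a s"
proof -
  have "summable (\<lambda>n. norm (dir_term a s n))"
    by (rule summable_comparison_test[of _ "\<lambda>n. norm (a n)"])
      (use assms norm_dir_term_le in \<open>auto simp: dir_abs_summable_def\<close>)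
  then show ?thesis
    unfolding dir_eval_def by (rule summable_sums[OF summable_norm_cancel])
qed

lemma dir_abs_summable_add:
  "dir_abs_summable a \<Longrightarrow> dir_abs_summable b \<Longrightarrow> dir_abs_summable (\<lambda>n. a n + b n)"
  unfolding dir_abs_summable_def
  by (rule summable_comparison_test[of _ "\<lambda>n. norm (a n) + norm (b n)"])
    (auto intro: summable_add norm_triangle_ineq)

lemma dir_abs_summable_mult: "dir_abs_summable a \<Longrightarrow> dir_abs_summable (\<lambda>n. c * a n)"
  unfolding dir_abs_summable_def by (simp add: norm_mult summable_mult)

lemma dir_abs_summable_sum:
  "(\<And>i. i \<in> I \<Longrightarrow> dir_abs_summable (a i)) \<Longrightarrow> dir_abs_summable (\<lambda>n. \<Sum>i\<in>I. a i n)"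
proof (induction I rule: infinite_finite_induct)
  case (insert i I)
  then show ?case by (simp add: dir_abs_summable_add)
qed (simp_all add: dir_abs_summable_def)

lemma dir_eval_add:
  assumes "dir_abs_summable a" "dir_abs_summable b" "Re s \<ge> 0"
  shows "dir_eval (\<lambda>n. a n + b n) s = dir_eval a s + dir_eval b s"
proof -
  have "dir_term (\<lambda>n. a n + b n) s sums (dir_eval a s + dir_eval b s)"
    using sums_add[OF dir_term_sums[OF assms(1,3)] dir_term_sums[OF assms(2,3)]]
    by (simp add: dir_term_def[abs_def] distrib_right)
  then show ?thesis by (simp add: dir_eval_def sums_iff)
qed

lemma dir_eval_mult:
  assumes "dir_abs_summable a" "Re s \<ge> 0"
  shows "dir_eval (\<lambda>n. c * a n) s = c * dir_eval a s"
proof -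
  have "dir_term (\<lambda>n. c * a n) s sums (c * dir_eval a s)"
    using sums_mult[OF dir_term_sums[OF assms]] by (simp add: dir_term_def[abs_def] mult.assoc)
  then show ?thesis by (simp add: dir_eval_def sums_iff)
qed

lemma dir_eval_diff:
  assumes "dir_abs_summable a" "dir_abs_summable b" "Re s \<ge> 0"
  shows "dir_eval (\<lambda>n. a n - b n) s = dir_eval a s - dir_eval b s"
  using dir_eval_add[OF assms(1) dir_abs_summable_mult[OF assms(2)] assms(3), of "-1"]
    dir_eval_mult[OF assms(2,3), of "-1"]
  by simp

lemma dir_eval_sum:
  assumes "\<And>i. i \<in> I \<Longrightarrow> dir_abs_summable (a i)" "Re s \<ge> 0"
  shows "dir_eval (\<lambda>n. \<Sum>i\<in>I. a i n) s = (\<Sum>i\<in>I. dir_eval (a i) s)"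
  using assms(1)
proof (induction I rule: infinite_finite_induct)
  case (insert i I)
  then have "dir_eval (\<lambda>n. a i n + (\<Sum>j\<in>I. a j n)) s = dir_eval (a i) s + dir_eval (\<lambda>n. \<Sum>j\<in>I. a j n) s"
    by (intro dir_eval_add dir_abs_summable_sum assms(2)) auto
  with insert show ?case by simp
qed (simp_all add: dir_eval_def dir_term_def)

definition dir_monomial :: "nat \<Rightarrow> nat \<Rightarrow> complex" where
  "dir_monomial n j = (if j = n then 1 else 0)"

lemma dir_abs_summable_monomial: "dir_abs_summable (dir_monomial n)"
  using summable_single[of n "\<lambda>_. 1::real"]
  by (simp add: dir_abs_summable_def dir_monomial_def if_distrib cong: if_cong)

lemma dir_eval_monomial: "dir_eval (dir_monomial n) s = of_nat n powr (-s)"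
proof -
  have "dir_term (dir_monomial n) s = (\<lambda>j. if j = n then of_nat n powr (-s) else 0)"
    by (auto simp: dir_term_def dir_monomial_def)
  then show ?thesis
    using sums_single[of n "\<lambda>_. of_nat n powr (-s)"] by (simp add: dir_eval_def sums_iff)
qed

lemma Anorm_monomial: "Anorm (dir_monomial n) = 1"
  using sums_single[of n "\<lambda>_. 1::real"]
  by (simp add: Anorm_def dir_monomial_def sums_iff if_distrib cong: if_cong)

lemma monomial_in_Ak: "smooth k n \<Longrightarrow> dir_monomial n \<in> Ak k"
  using dir_abs_summable_monomial[of n]
  by (auto simp: Ak_def dir_monomial_def dir_abs_summable_def)

definition dir_shift :: "nat \<Rightarrow> (nat \<Rightarrow> complex) \<Rightarrow> nat \<Rightarrow> complex" where
  "dir_shift Q a N = (if Q dvd N then a (N div Q) else 0)"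

lemma dir_shift_mult: "Q \<noteq> 0 \<Longrightarrow> dir_shift Q a (Q * n) = a n"
  by (simp add: dir_shift_def)

lemma dir_shift_mult_mult: "P \<noteq> 0 \<Longrightarrow> dir_shift (P * Q) a (P * N) = dir_shift Q a N"
  by (simp add: dir_shift_def)

lemma sums_mult_reindex_iff:
  assumes "Q \<noteq> 0" "\<And>N. \<not> Q dvd N \<Longrightarrow> f N = 0"
  shows "(\<lambda>n. f (Q * n)) sums c \<longleftrightarrow> f sums c"
  using assms by (intro sums_mono_reindex) (auto simp: strict_mono_def)

lemma dir_abs_summable_shift:
  assumes "Q \<noteq> 0" "dir_abs_summable a"
  shows "dir_abs_summable (dir_shift Q a)"
proof -
  have "(\<lambda>n. norm (dir_shift Q a (Q * n))) sums (\<Sum>n. norm (a n))"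
    using assms by (simp add: dir_shift_mult dir_abs_summable_def summable_sums)
  then show ?thesis
    using assms(1) by (subst (asm) sums_mult_reindex_iff) (auto simp: dir_shift_def dir_abs_summable_def sums_iff)
qed

lemma dir_eval_shift:
  assumes "Q \<noteq> 0" "dir_abs_summable a" "Re s \<ge> 0"
  shows "dir_eval (dir_shift Q a) s = of_nat Q powr (-s) * dir_eval a s"
proof -
  have "(\<lambda>n. dir_term (dir_shift Q a) s (Q * n)) = (\<lambda>n. of_nat Q powr (-s) * dir_term a s n)"
    unfolding dir_term_def dir_shift_mult[OF assms(1)] of_nat_mult_powr by (simp add: mult_ac)
  then have "(\<lambda>n. dir_term (dir_shift Q a) s (Q * n)) sums (of_nat Q powr (-s) * dir_eval a s)"
    using sums_mult[OF dir_term_sums[OF assms(2,3)]] by simp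
  then have "dir_term (dir_shift Q a) s sums (of_nat Q powr (-s) * dir_eval a s)"
    using assms(1) by (subst (asm) sums_mult_reindex_iff) (auto simp: dir_shift_def dir_term_def)
  then show ?thesis
    by (simp add: dir_eval_def sums_iff)
qed

section \<open>Leading coefficients\<close>

lemma tendsto_powr_at_top_0:
  fixes x :: real
  assumes "0 < x" "x < 1"
  shows "((\<lambda>\<sigma>. x powr \<sigma>) \<longlongrightarrow> 0) at_top"
proof -
  have "filterlim (\<lambda>\<sigma>. ln x * \<sigma>) at_bot at_top"
    by (rule filterlim_tendsto_neg_mult_at_bot[OF tendsto_const]) (use assms in \<open>auto simp: filterlim_ident\<close>)
  then show ?thesis
    using assms filterlim_compose[OF exp_at_bot] by (simp add: powr_def mult.commute)
qed

lemma real_powr_ratio: "real k powr (-\<sigma>) * real N powr \<sigma> = (real N / real k) powr \<sigma>"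
proof -
  have "real k powr (-\<sigma>) * real N powr \<sigma> = real N powr \<sigma> / real k powr \<sigma>"
    by (simp add: powr_minus divide_inverse mult.commute)
  also have "\<dots> = (real N / real k) powr \<sigma>"
    by (simp add: powr_divide)
  finally show ?thesis .
qed

lemma dir_term_rescale:
  "dir_term a (of_real \<sigma>) k * of_nat N powr of_real \<sigma> = a k * of_real ((real N / real k) powr \<sigma>)"
  by (simp add: dir_term_def of_nat_powr_of_real mult.assoc flip: real_powr_ratio of_real_minus of_real_mult)

lemma dir_term_rescaled_below:
  assumes "\<And>j. 1 \<le> j \<Longrightarrow> j < N \<Longrightarrow> a j = 0" "k < N"
  shows "dir_term a (of_real \<sigma>) k * of_nat N powr of_real \<sigma> = 0"
  using assms by (cases "k = 0") (auto simp: dir_term_rescale)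

lemma dir_term_rescaled_tendsto:
  assumes N: "N \<ge> 1" and below: "\<And>j. 1 \<le> j \<Longrightarrow> j < N \<Longrightarrow> a j = 0"
  shows "((\<lambda>\<sigma>. dir_term a (of_real \<sigma>) k * of_nat N powr of_real \<sigma>) \<longlongrightarrow> (if k = N then a N else 0)) at_top"
proof -
  consider "k < N" | "k = N" | "k > N" by linarith
  then show ?thesis
  proof cases
    case 1
    then show ?thesis using dir_term_rescaled_below[OF below] by simp
  next
    case 2
    then show ?thesis using N by (simp add: dir_term_rescale)
  next
    case 3
    then have "((\<lambda>\<sigma>. (real N / real k) powr \<sigma>) \<longlongrightarrow> 0) at_top"
      using N by (intro tendsto_powr_at_top_0) auto
    then have "((\<lambda>\<sigma>. a k * of_real ((real N / real k) powr \<sigma>)) \<longlongrightarrow> a k * of_real 0) at_top"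
      by (intro tendsto_intros)
    then show ?thesis using 3 by (simp add: dir_term_rescale)
  qed
qed

lemma norm_dir_term_rescaled_le:
  assumes N: "N \<ge> 1" and below: "\<And>j. 1 \<le> j \<Longrightarrow> j < N \<Longrightarrow> a j = 0" and "\<sigma>\<^sub>0 \<le> \<sigma>"
  shows "norm (dir_term a (of_real \<sigma>) k * of_nat N powr of_real \<sigma>) \<le>
    norm (a k) * real k powr (-\<sigma>\<^sub>0) * real N powr \<sigma>\<^sub>0"
proof (cases "k < N")
  case False
  then have "(real N / real k) powr \<sigma> \<le> (real N / real k) powr \<sigma>\<^sub>0"
    using N assms(3) by (intro powr_mono') auto
  also have "\<dots> = real k powr (-\<sigma>\<^sub>0) * real N powr \<sigma>\<^sub>0"
    by (rule real_powr_ratio[symmetric])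
  finally show ?thesis
    by (simp add: dir_term_rescale norm_mult mult.assoc mult_left_mono)
qed (simp add: dir_term_rescaled_below[OF below])

lemma dir_eval_leading_tendsto:
  assumes summ: "summable (\<lambda>n. norm (a n) * real n powr (-\<sigma>\<^sub>0))"
    and N: "N \<ge> 1" and below: "\<And>j. 1 \<le> j \<Longrightarrow> j < N \<Longrightarrow> a j = 0"
  shows "((\<lambda>\<sigma>. dir_eval a (of_real \<sigma>) * of_nat N powr of_real \<sigma>) \<longlongrightarrow> a N) at_top"
proof -
  define t where "t k \<sigma> = dir_term a (of_real \<sigma>) k * of_nat N powr of_real \<sigma>" for k \<sigma>
  have "eventually (\<lambda>(k, \<sigma>). norm (t k \<sigma>) \<le> norm (a k) * real k powr (-\<sigma>\<^sub>0) * real N powr \<sigma>\<^sub>0)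
      (at_top \<times>\<^sub>F at_top)"
    unfolding eventually_prod_filter t_def using norm_dir_term_rescaled_le[OF N below]
    by (intro exI[of _ "\<lambda>_. True"] exI[of _ "\<lambda>\<sigma>. \<sigma> \<ge> \<sigma>\<^sub>0"]) (auto intro: eventually_ge_at_top)
  from tannerys_theorem[OF dir_term_rescaled_tendsto[OF N below] this[unfolded t_def] summable_mult2[OF summ]]
  have summ_t: "eventually (\<lambda>\<sigma>. summable (\<lambda>k. norm (t k \<sigma>))) at_top"
    and lim: "((\<lambda>\<sigma>. \<Sum>k. t k \<sigma>) \<longlongrightarrow> (\<Sum>k. if k = N then a N else 0)) at_top"
    unfolding t_def by auto
  have "eventually (\<lambda>\<sigma>. (\<Sum>k. t k \<sigma>) = dir_eval a (of_real \<sigma>) * of_nat N powr of_real \<sigma>) at_top"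
    using summ_t
  proof eventually_elim
    case (elim \<sigma>)
    have "of_nat N powr of_real \<sigma> \<noteq> (0::complex)"
      using N by (simp add: of_nat_powr_nonzero)
    moreover have "summable (\<lambda>k. t k \<sigma> / of_nat N powr of_real \<sigma>)"
      using elim by (rule summable_divide[OF summable_norm_cancel])
    ultimately have "summable (dir_term a (of_real \<sigma>))"
      by (simp add: t_def)
    then show ?case
      by (simp add: t_def dir_eval_def suminf_mult2)
  qed
  with lim show ?thesis
    using sums_single[of N "\<lambda>_. a N"] by (simp add: sums_iff tendsto_cong)
qed

lemma dir_eval_leading_coeff:
  assumes summ: "summable (\<lambda>n. norm (a n) * real n powr (-\<sigma>\<^sub>0))" and N: "N \<ge> 1"
    and lim: "((\<lambda>\<sigma>. dir_eval a (of_real \<sigma>) * of_nat N powr of_real \<sigma>) \<longlongrightarrow> L) at_top"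
  shows "(\<forall>j. 1 \<le> j \<longrightarrow> j < N \<longrightarrow> a j = 0) \<and> a N = L"
proof -
  have below: "\<forall>j. 1 \<le> j \<longrightarrow> j < N \<longrightarrow> a j = 0"
  proof (rule ccontr)
    assume "\<not> ?thesis"
    then obtain j where j: "1 \<le> j" "j < N" "a j \<noteq> 0"
      and least: "\<And>i. 1 \<le> i \<Longrightarrow> i < j \<Longrightarrow> a i = 0"
      using exists_least_iff[of "\<lambda>j. 1 \<le> j \<and> j < N \<and> a j \<noteq> 0"] by (auto dest: order.strict_trans)
    have rescale: "dir_eval a (of_real \<sigma>) * of_nat j powr of_real \<sigma> =
        dir_eval a (of_real \<sigma>) * of_nat N powr of_real \<sigma> * of_real ((real j / real N) powr \<sigma>)" for \<sigma>
      using N by (simp add: of_nat_powr_of_real powr_divide flip: of_real_mult)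
    have "((\<lambda>\<sigma>. (real j / real N) powr \<sigma>) \<longlongrightarrow> 0) at_top"
      using j by (intro tendsto_powr_at_top_0) auto
    then have "((\<lambda>\<sigma>. dir_eval a (of_real \<sigma>) * of_nat j powr of_real \<sigma>) \<longlongrightarrow> L * of_real 0) at_top"
      unfolding rescale by (intro tendsto_intros lim)
    moreover have "((\<lambda>\<sigma>. dir_eval a (of_real \<sigma>) * of_nat j powr of_real \<sigma>) \<longlongrightarrow> a j) at_top"
      using j(1) least by (rule dir_eval_leading_tendsto[OF summ])
    ultimately show False
      using j(3) tendsto_unique[OF trivial_limit_at_top_linorder] by force
  qed
  then have "((\<lambda>\<sigma>. dir_eval a (of_real \<sigma>) * of_nat N powr of_real \<sigma>) \<longlongrightarrow> a N) at_top"
    using N by (intro dir_eval_leading_tendsto[OF summ]) auto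
  with below show ?thesis
    using lim tendsto_unique[OF trivial_limit_at_top_linorder] by blast
qed

lemma dir_coeffs_eq:
  assumes "dir_abs_summable a" "dir_abs_summable b"
    and "\<And>\<sigma>. \<sigma> > 0 \<Longrightarrow> dir_eval a (of_real \<sigma>) = dir_eval b (of_real \<sigma>)" and "n \<ge> 1"
  shows "a n = b n"
proof -
  have d: "dir_abs_summable (\<lambda>j. a j - b j)"
    using assms(1,2) dir_abs_summable_add dir_abs_summable_mult[of b "-1"] by fastforce
  have "dir_eval (\<lambda>j. a j - b j) (of_real \<sigma>) = 0" if "\<sigma> > 0" for \<sigma>
    using dir_eval_diff[OF assms(1,2), of "of_real \<sigma>"] assms(3)[OF that] that by simp
  then have "eventually (\<lambda>\<sigma>. 0 = dir_eval (\<lambda>j. a j - b j) (of_real \<sigma>) * of_nat n powr of_real \<sigma>) at_top"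
    by (auto simp: eventually_at_top_dense)
  then have "((\<lambda>\<sigma>. dir_eval (\<lambda>j. a j - b j) (of_real \<sigma>) * of_nat n powr of_real \<sigma>) \<longlongrightarrow> 0) at_top"
    by (rule Lim_transform_eventually[OF tendsto_const])
  from dir_eval_leading_coeff[OF dir_abs_summable_weighted[OF d order_refl] assms(4) this]
  show ?thesis by simp
qed

lemma dir_eval_power_leading:
  assumes "dir_abs_summable a" "dir_abs_summable b" and r: "r \<ge> 1"
    and below: "\<And>j. 1 \<le> j \<Longrightarrow> j < r \<Longrightarrow> a j = 0"
    and power: "\<And>\<sigma>. \<sigma> > 0 \<Longrightarrow> dir_eval b (of_real \<sigma>) = dir_eval a (of_real \<sigma>) ^ i"
  shows "(\<forall>j. 1 \<le> j \<longrightarrow> j < r ^ i \<longrightarrow> b j = 0) \<and> b (r ^ i) = a r ^ i"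
proof (rule dir_eval_leading_coeff[OF dir_abs_summable_weighted[OF assms(2) order_refl]])
  have "((\<lambda>\<sigma>. (dir_eval a (of_real \<sigma>) * of_nat r powr of_real \<sigma>) ^ i) \<longlongrightarrow> a r ^ i) at_top"
    using dir_eval_leading_tendsto[OF dir_abs_summable_weighted[OF assms(1) order_refl] r below]
    by (rule tendsto_power)
  moreover have "(dir_eval a (of_real \<sigma>) * of_nat r powr of_real \<sigma>) ^ i =
      dir_eval b (of_real \<sigma>) * (of_nat r powr of_real \<sigma>) ^ i" if "\<sigma> > 0" for \<sigma>
    using power[OF that] by (simp add: power_mult_distrib)
  then have "eventually (\<lambda>\<sigma>. (dir_eval a (of_real \<sigma>) * of_nat r powr of_real \<sigma>) ^ i =
      dir_eval b (of_real \<sigma>) * (of_nat r powr of_real \<sigma>) ^ i) at_top"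
    by (auto simp: eventually_at_top_dense)
  ultimately show "((\<lambda>\<sigma>. dir_eval b (of_real \<sigma>) * of_nat (r ^ i) powr of_real \<sigma>) \<longlongrightarrow> a r ^ i) at_top"
    unfolding of_nat_power_powr by (rule Lim_transform_eventually)
qed (use r in simp)

lemma Dk_tendsto_at_top:
  assumes "\<psi> \<in> Dk k"
  obtains \<beta> where "((\<lambda>\<sigma>. \<psi> (of_real \<sigma>)) \<longlongrightarrow> \<beta>) at_top"
proof -
  obtain b and \<sigma>\<^sub>0 :: real where sums: "\<And>s. Re s > \<sigma>\<^sub>0 \<Longrightarrow> dir_term b s sums \<psi> s"
    using assms by (auto simp: Dk_def)
  define \<sigma>\<^sub>1 where "\<sigma>\<^sub>1 = max \<sigma>\<^sub>0 0 + 1"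
  have "summable (dir_term b (of_real \<sigma>\<^sub>1))"
    using sums[of "of_real \<sigma>\<^sub>1"] by (auto simp: \<sigma>\<^sub>1_def sums_iff)
  then have "Bseq (dir_term b (of_real \<sigma>\<^sub>1))"
    by (intro convergent_imp_Bseq) (auto simp: convergent_def dest: summable_LIMSEQ_zero)
  then obtain K where K: "\<And>n. norm (dir_term b (of_real \<sigma>\<^sub>1) n) \<le> K"
    unfolding Bseq_def by (metis less_imp_le)
  \<comment> \<open>bounded terms at \<open>\<sigma>\<^sub>1\<close> give absolute convergence at \<open>\<sigma>\<^sub>1 + 2\<close>\<close>
  have "summable (\<lambda>n. norm (b n) * real n powr (-(\<sigma>\<^sub>1 + 2)))"
  proof (rule summable_comparison_test[of _ "\<lambda>n. K * real n powr (-2)"])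
    show "summable (\<lambda>n. K * real n powr (-2))"
      by (intro summable_mult) (simp add: summable_real_powr_iff)
    have "norm (b n) * real n powr (-\<sigma>\<^sub>1) * real n powr (-2) \<le> K * real n powr (-2)" for n
      using K[of n] by (intro mult_right_mono) (simp_all add: dir_term_def norm_mult of_nat_powr_of_real flip: of_real_minus)
    then show "\<exists>N. \<forall>n\<ge>N. norm (norm (b n) * real n powr (-(\<sigma>\<^sub>1 + 2))) \<le> K * real n powr (-2)"
      by (auto simp: powr_add[symmetric] mult.assoc)
  qed
  from dir_eval_leading_tendsto[OF this, of 1]
  have "((\<lambda>\<sigma>. dir_eval b (of_real \<sigma>)) \<longlongrightarrow> b 1) at_top"
    by simp
  moreover have "eventually (\<lambda>\<sigma>. dir_eval b (of_real \<sigma>) = \<psi> (of_real \<sigma>)) at_top"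
    using eventually_gt_at_top[of \<sigma>\<^sub>0]
    by eventually_elim (metis Re_complex_of_real dir_eval_def sums sums_unique)
  ultimately show ?thesis
    by (intro that[of "b 1"]) (rule Lim_transform_eventually)
qed

section \<open>Composition with affine symbols\<close>

text \<open>The coefficients of \<open>f(c s + i \<tau>)\<close>: the coefficient \<open>a\<^sub>n\<close>, rotated by \<open>n^(-i \<tau>)\<close>, moves to index \<open>n^c\<close>.\<close>
definition dir_affine_comp :: "nat \<Rightarrow> real \<Rightarrow> (nat \<Rightarrow> complex) \<Rightarrow> nat \<Rightarrow> complex" where
  "dir_affine_comp c \<tau> a N =
     (if N \<in> range (\<lambda>n. n ^ c)
      then a (inv (\<lambda>n. n ^ c) N) * of_nat (inv (\<lambda>n. n ^ c) N) powr (- \<i> * of_real \<tau>) else 0)"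

lemma strict_mono_power_nat: "c \<ge> 1 \<Longrightarrow> strict_mono (\<lambda>n::nat. n ^ c)"
  by (auto simp: strict_mono_def intro: power_strict_mono)

lemma dir_affine_comp_power:
  "c \<ge> 1 \<Longrightarrow> dir_affine_comp c \<tau> a (n ^ c) = a n * of_nat n powr (- \<i> * of_real \<tau>)"
proof -
  assume "c \<ge> 1"
  then have "inv (\<lambda>n. n ^ c) (n ^ c) = n"
    by (intro inv_f_eq strict_mono_imp_inj_on strict_mono_power_nat) auto
  then show ?thesis
    by (simp add: dir_affine_comp_def)
qed

lemma
  assumes c: "c \<ge> 1" and a: "dir_abs_summable a" "a 0 = 0"
  shows dir_abs_summable_affine_comp: "dir_abs_summable (dir_affine_comp c \<tau> a)"
    and Anorm_affine_comp: "Anorm (dir_affine_comp c \<tau> a) = Anorm a"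
proof -
  have "norm (dir_affine_comp c \<tau> a (n ^ c)) = norm (a n)" for n
    using c a(2) by (cases "n = 0") (simp_all add: dir_affine_comp_power norm_mult norm_of_nat_powr)
  then have "(\<lambda>n. norm (dir_affine_comp c \<tau> a (n ^ c))) sums Anorm a"
    using a(1) by (simp add: Anorm_def dir_abs_summable_def summable_sums)
  then have "(\<lambda>N. norm (dir_affine_comp c \<tau> a N)) sums Anorm a"
    by (subst (asm) sums_mono_reindex[OF strict_mono_power_nat[OF c]]) (auto simp: dir_affine_comp_def)
  then show "dir_abs_summable (dir_affine_comp c \<tau> a)" "Anorm (dir_affine_comp c \<tau> a) = Anorm a"
    by (auto simp: dir_abs_summable_def Anorm_def sums_iff)
qed

lemma dir_eval_affine_comp:
  assumes c: "c \<ge> 1" and a: "dir_abs_summable a" "a 0 = 0" and s: "Re s \<ge> 0"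
  shows "dir_eval (dir_affine_comp c \<tau> a) s = dir_eval a (of_nat c * s + \<i> * of_real \<tau>)"
proof -
  have "dir_term (dir_affine_comp c \<tau> a) s (n ^ c) = dir_term a (of_nat c * s + \<i> * of_real \<tau>) n" for n
  proof (cases "n = 0")
    case False
    have "of_nat n powr (- (of_nat c * s + \<i> * of_real \<tau>)) =
        of_nat n powr (of_nat c * (- s)) * of_nat n powr (- \<i> * of_real \<tau>)"
      by (subst powr_add[symmetric]) (simp add: algebra_simps)
    then have "of_nat n powr (- (of_nat c * s + \<i> * of_real \<tau>)) =
        (of_nat n powr (- s)) ^ c * of_nat n powr (- \<i> * of_real \<tau>)"
      by (simp only: of_nat_powr_of_nat_mult[OF False])
    then show ?thesis
      unfolding dir_term_def dir_affine_comp_power[OF c] of_nat_power_powr by (simp add: mult_ac)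
  qed (use c a(2) in \<open>simp add: dir_term_def dir_affine_comp_power\<close>)
  moreover have "Re (of_nat c * s + \<i> * of_real \<tau>) \<ge> 0"
    using s by simp
  ultimately have "(\<lambda>n. dir_term (dir_affine_comp c \<tau> a) s (n ^ c)) sums dir_eval a (of_nat c * s + \<i> * of_real \<tau>)"
    using dir_term_sums[OF a(1)] by simp
  then have "dir_term (dir_affine_comp c \<tau> a) s sums dir_eval a (of_nat c * s + \<i> * of_real \<tau>)"
    by (subst (asm) sums_mono_reindex[OF strict_mono_power_nat[OF c]]) (auto simp: dir_affine_comp_def dir_term_def)
  then show ?thesis
    by (simp add: dir_eval_def sums_iff)
qed

lemma comp_isometry_affine:
  assumes c: "c \<ge> 1" and \<phi>: "\<And>s. s \<in> C0 \<Longrightarrow> \<phi> s = of_nat c * s + \<i> * of_real \<tau>"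
  shows "comp_isometry k \<phi>"
  unfolding comp_isometry_def
proof (intro ballI impI)
  fix a b assume a: "a \<in> Ak k" and b: "b \<in> Ak k" and image: "\<forall>s\<in>C0. dir_eval a (\<phi> s) = dir_eval b s"
  note a' = Ak_imp_dir_abs_summable[OF a] Ak_coeff_0[OF a]
  have "dir_affine_comp c \<tau> a N = b N" for N
  proof (cases "N = 0")
    case True
    then show ?thesis
      using dir_affine_comp_power[OF c, of \<tau> a 0] c a'(2) Ak_coeff_0[OF b] by (simp add: power_0_left)
  next
    case False
    show ?thesis
    proof (rule dir_coeffs_eq[OF dir_abs_summable_affine_comp[OF c a'] Ak_imp_dir_abs_summable[OF b]])
      fix \<sigma> :: real assume "\<sigma> > 0"
      then show "dir_eval (dir_affine_comp c \<tau> a) (of_real \<sigma>) = dir_eval b (of_real \<sigma>)"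
        using image \<phi> by (simp add: dir_eval_affine_comp[OF c a'] C0_def)
    qed (use False in simp)
  qed
  then show "Anorm b = Anorm a"
    using Anorm_affine_comp[OF c a'] by (metis ext)
qed

section \<open>Isometric composition operators\<close>

lemma smooth_mult: "smooth k a \<Longrightarrow> smooth k b \<Longrightarrow> smooth k (a * b)"
  by (auto simp: smooth_def in_prime_factors_iff prime_dvd_mult_iff subset_iff)

lemma smooth_1: "smooth k 1"
  by (simp add: smooth_def)

lemma smooth_power: "smooth k a \<Longrightarrow> smooth k (a ^ m)"
  by (induction m) (use smooth_1 in \<open>simp_all add: smooth_mult\<close>)

lemma smooth_2: "k \<ge> 1 \<Longrightarrow> smooth k 2"
proof -
  assume "k \<ge> 1"
  moreover have "{q::nat. prime q \<and> q \<le> 2} = {2}"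
    using prime_ge_2_nat by (auto intro: antisym)
  ultimately have "2 \<in> first_primes k"
    by (simp add: first_primes_def)
  then show ?thesis
    by (auto simp: smooth_def prime_factors_dvd dest: primes_dvd_imp_eq[of _ 2])
qed

lemma binomial_combination_eventually_zero:
  fixes y :: "nat \<Rightarrow> 'a::comm_ring_1"
  assumes "\<And>m. m \<ge> M \<Longrightarrow> (\<Sum>i\<le>c. of_nat (m choose i) * y i) = 0"
  shows "\<forall>i\<le>c. y i = 0"
  using assms
proof (induction c arbitrary: y)
  case 0
  then show ?case using 0[of M] by simp
next
  case (Suc c)
  have shift: "(\<Sum>i\<le>Suc c. of_nat (m choose i) * y i) =
      y 0 + (\<Sum>i\<le>c. of_nat (m choose Suc i) * y (Suc i))" for m
    by (simp add: sum.atMost_Suc_shift del: sum.atMost_Suc)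
  have pascal: "(\<Sum>i\<le>Suc c. of_nat (Suc m choose i) * y i) =
      (\<Sum>i\<le>Suc c. of_nat (m choose i) * y i) + (\<Sum>i\<le>c. of_nat (m choose i) * y (Suc i))" for m
    unfolding shift by (simp add: sum.distrib ring_distribs del: sum.atMost_Suc)
  have "(\<Sum>i\<le>c. of_nat (m choose i) * y (Suc i)) = 0" if "m \<ge> M" for m
    using Suc.prems[of m] Suc.prems[of "Suc m"] that by (simp add: pascal del: sum.atMost_Suc)
  then have "\<forall>i\<le>c. y (Suc i) = 0"
    by (rule Suc.IH)
  moreover have "y 0 = 0"
    using Suc.prems[of M] calculation by (simp add: shift del: sum.atMost_Suc)
  ultimately show ?case
    by (metis Suc_le_mono not0_implies_Suc)
qed

lemma exists_unimodular_norm_add_less: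
  fixes u v :: complex
  assumes "u \<noteq> 0" "v \<noteq> 0"
  obtains l where "norm l = 1" "norm (u + l * v) < norm u + norm v"
proof
  define l where "l = - sgn u / sgn v"
  show "norm l = 1"
    using assms by (simp add: l_def norm_divide norm_sgn)
  have "u + l * v = sgn u * of_real (norm u - norm v)"
    using assms by (simp add: l_def sgn_eq field_simps)
  then have "norm (u + l * v) = \<bar>norm u - norm v\<bar>"
    using assms by (simp add: norm_mult norm_sgn flip: of_real_diff)
  also have "\<dots> < norm u + norm v"
    using assms by (simp add: abs_less_iff)
  finally show "norm (u + l * v) < norm u + norm v" .
qed

lemma Anorm_add_less:
  assumes "dir_abs_summable a" "dir_abs_summable b"
    and "norm (a j + b j) < norm (a j) + norm (b j)"
  shows "Anorm (\<lambda>n. a n + b n) < Anorm a + Anorm b"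
proof -
  define g where "g n = norm (a n) + norm (b n) - norm (a n + b n)" for n
  have ab: "dir_abs_summable (\<lambda>n. a n + b n)"
    using assms(1,2) by (rule dir_abs_summable_add)
  have "summable g"
    using assms(1,2) ab unfolding g_def dir_abs_summable_def by (intro summable_diff summable_add)
  moreover have "0 \<le> g n" for n
    using norm_triangle_ineq[of "a n" "b n"] by (simp add: g_def)
  moreover have "0 < g j"
    using assms(3) by (simp add: g_def)
  ultimately have "0 < suminf g"
    by (rule suminf_pos2)
  also have "suminf g = Anorm a + Anorm b - Anorm (\<lambda>n. a n + b n)"
    using assms(1,2) ab unfolding g_def Anorm_def dir_abs_summable_def
    by (simp add: suminf_diff suminf_add summable_add)
  finally show ?thesis by simp
qed

lemma Ak_add: "a \<in> Ak k \<Longrightarrow> b \<in> Ak k \<Longrightarrow> (\<lambda>n. a n + b n) \<in> Ak k"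
  using dir_abs_summable_add[of a b]
  by (auto simp: Ak_def dir_abs_summable_def) (metis add.right_neutral)

lemma Ak_mult: "a \<in> Ak k \<Longrightarrow> (\<lambda>n. c * a n) \<in> Ak k"
  using dir_abs_summable_mult[of a c] by (auto simp: Ak_def dir_abs_summable_def)

lemma Anorm_mult: "dir_abs_summable a \<Longrightarrow> Anorm (\<lambda>n. c * a n) = norm c * Anorm a"
  by (simp add: Anorm_def dir_abs_summable_def norm_mult suminf_mult)

lemma Anorm_monomial_add:
  assumes "n \<noteq> n'" "norm l = 1"
  shows "Anorm (\<lambda>j. dir_monomial n j + l * dir_monomial n' j) = 2"
proof -
  have "(\<lambda>j. norm (dir_monomial n j + l * dir_monomial n' j)) =
      (\<lambda>j. (if j = n then 1 else 0) + (if j = n' then 1 else 0))"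
    using assms by (auto simp: dir_monomial_def)
  then show ?thesis
    using sums_add[OF sums_single[of n "\<lambda>_. 1::real"] sums_single[of n' "\<lambda>_. 1::real"]]
    by (simp add: Anorm_def sums_iff)
qed

lemma comp_isometry_Anorm_image_monomial:
  assumes "comp_isometry k \<phi>" "smooth k n"
    and "b \<in> Ak k" "\<And>s. s \<in> C0 \<Longrightarrow> dir_eval b s = of_nat n powr (- \<phi> s)"
  shows "Anorm b = 1"
  using assms monomial_in_Ak[OF assms(2)] Anorm_monomial[of n]
  by (auto simp: comp_isometry_def dir_eval_monomial)

text \<open>An isometry sends \<open>n^(-s) + l n'^(-s)\<close> (norm 2) to the sum of the two images; if these shared
  a coefficient, a suitable unimodular \<open>l\<close> would make the norm of the sum smaller than 2.\<close>
lemma comp_isometry_images_disjoint: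
  assumes iso: "comp_isometry k \<phi>" and \<phi>: "\<phi> ` C0 \<subseteq> C0" and n: "smooth k n" "smooth k n'" "n \<noteq> n'"
    and b: "b \<in> Ak k" "\<And>s. s \<in> C0 \<Longrightarrow> dir_eval b s = of_nat n powr (- \<phi> s)"
    and b': "b' \<in> Ak k" "\<And>s. s \<in> C0 \<Longrightarrow> dir_eval b' s = of_nat n' powr (- \<phi> s)"
  shows "b j = 0 \<or> b' j = 0"
proof (rule ccontr)
  assume "\<not> (b j = 0 \<or> b' j = 0)"
  then obtain l where l: "norm l = 1" and less: "norm (b j + l * b' j) < norm (b j) + norm (b' j)"
    using exists_unimodular_norm_add_less by blast
  define a where "a = (\<lambda>j. dir_monomial n j + l * dir_monomial n' j)"
  have "dir_eval a (\<phi> s) = dir_eval (\<lambda>j. b j + l * b' j) s" if "s \<in> C0" for s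
  proof -
    have "Re (\<phi> s) \<ge> 0" "Re s \<ge> 0"
      using \<phi> that by (auto simp: C0_def)
    then show ?thesis
      using that b b' unfolding a_def
      by (simp add: dir_eval_add dir_eval_mult dir_abs_summable_mult dir_abs_summable_monomial
          Ak_imp_dir_abs_summable dir_eval_monomial)
  qed
  moreover have "a \<in> Ak k"
    unfolding a_def by (intro Ak_add Ak_mult monomial_in_Ak n)
  ultimately have "Anorm (\<lambda>j. b j + l * b' j) = 2"
    using iso Ak_add[OF b(1) Ak_mult[OF b'(1)]] Anorm_monomial_add[OF n(3) l]
    by (auto simp: comp_isometry_def a_def)
  moreover have "Anorm (\<lambda>j. b j + l * b' j) < Anorm b + Anorm (\<lambda>j. l * b' j)"
    using b(1) b'(1) less
    by (intro Anorm_add_less) (auto simp: Ak_imp_dir_abs_summable dir_abs_summable_mult norm_mult l)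
  moreover have "Anorm b = 1" "Anorm b' = 1"
    using comp_isometry_Anorm_image_monomial[OF iso] n b b' by auto
  ultimately show False
    using b'(1) l by (simp add: Anorm_mult Ak_imp_dir_abs_summable)
qed

lemma powr_eq_powr_imp_Ints:
  fixes x a b :: complex
  assumes "x \<noteq> 0" "x powr a = x powr b"
  shows "(a - b) * Ln x / (2 * of_real pi * \<i>) \<in> \<int>"
proof -
  obtain n :: int where "a * Ln x = b * Ln x + of_int (2 * n) * of_real pi * \<i>"
    using assms exp_eq[of "a * Ln x" "b * Ln x"] by (auto simp: powr_def)
  then have "(a - b) * Ln x / (2 * of_real pi * \<i>) = of_int n"
    by (simp add: field_simps)
  then show ?thesis
    by simp
qed

lemma continuous_on_Ints_valued_imp_constant_on:
  fixes f :: "'a::topological_space \<Rightarrow> 'b::real_normed_algebra_1"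
  assumes "connected S" "continuous_on S f" "\<And>x. x \<in> S \<Longrightarrow> f x \<in> \<int>"
  shows "f constant_on S"
proof (rule continuous_discrete_range_constant[OF assms(1,2)])
  have "1 \<le> norm (f y - f x)" if "x \<in> S" "y \<in> S" "f y \<noteq> f x" for x y
    using assms(3)[OF that(1)] assms(3)[OF that(2)] that(3) by (auto simp: Ints_def simp flip: of_int_diff)
  then show "\<exists>e>0. \<forall>y. y \<in> S \<and> f y \<noteq> f x \<longrightarrow> e \<le> norm (f y - f x)" if "x \<in> S" for x
    using that zero_less_one by blast
qed

locale isometric_comp =
  fixes k c0 :: nat and \<psi> \<phi> :: "complex \<Rightarrow> complex"
  assumes k: "k \<ge> 1" and \<psi>: "\<psi> \<in> Dk k" and \<phi>: "\<phi> = (\<lambda>s. of_nat c0 * s + \<psi> s)"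
    and \<phi>_C0: "\<phi> ` C0 \<subseteq> C0" and maps_into: "comp_maps_into k \<phi>" and isometry: "comp_isometry k \<phi>"
begin

definition \<beta> :: complex where
  "\<beta> = Lim at_top (\<lambda>\<sigma>. \<psi> (of_real \<sigma>))"

lemma tendsto_\<beta>: "((\<lambda>\<sigma>. \<psi> (of_real \<sigma>)) \<longlongrightarrow> \<beta>) at_top"
  using Dk_tendsto_at_top[OF \<psi>] unfolding \<beta>_def by (metis tendsto_Lim trivial_limit_at_top_linorder)

definition comp_monomial :: "nat \<Rightarrow> nat \<Rightarrow> complex" where
  "comp_monomial n = (SOME b. b \<in> Ak k \<and> (\<forall>s\<in>C0. dir_eval b s = of_nat n powr (- \<phi> s)))"

lemma comp_monomial:
  assumes "smooth k n"
  shows "comp_monomial n \<in> Ak k" "s \<in> C0 \<Longrightarrow> dir_eval (comp_monomial n) s = of_nat n powr (- \<phi> s)"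
proof -
  obtain b where "b \<in> Ak k" "\<forall>s\<in>C0. dir_eval (dir_monomial n) (\<phi> s) = dir_eval b s"
    using maps_into monomial_in_Ak[OF assms] unfolding comp_maps_into_def by blast
  then have "\<exists>b. b \<in> Ak k \<and> (\<forall>s\<in>C0. dir_eval b s = of_nat n powr (- \<phi> s))"
    by (auto simp: dir_eval_monomial)
  from someI_ex[OF this] show "comp_monomial n \<in> Ak k" "s \<in> C0 \<Longrightarrow> dir_eval (comp_monomial n) s = of_nat n powr (- \<phi> s)"
    unfolding comp_monomial_def by auto
qed

lemma comp_monomial_leading:
  assumes n: "smooth k n"
  shows "(\<forall>j. 1 \<le> j \<longrightarrow> j < n ^ c0 \<longrightarrow> comp_monomial n j = 0) \<and> comp_monomial n (n ^ c0) = of_nat n powr (- \<beta>)"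
proof (rule dir_eval_leading_coeff[OF dir_abs_summable_weighted[OF Ak_imp_dir_abs_summable[OF comp_monomial(1)[OF n]] order_refl]])
  have n0: "n \<noteq> 0" using n by (simp add: smooth_def)
  then show "n ^ c0 \<ge> 1" by simp
  have "of_nat n powr (- \<psi> (of_real \<sigma>)) = dir_eval (comp_monomial n) (of_real \<sigma>) * of_nat (n ^ c0) powr of_real \<sigma>"
    if "\<sigma> > 0" for \<sigma>
  proof -
    have "of_nat (n ^ c0) powr of_real \<sigma> = (of_nat n powr (of_nat c0 * of_real \<sigma>) :: complex)"
      by (simp only: of_nat_power_powr of_nat_powr_of_nat_mult[OF n0])
    moreover have "dir_eval (comp_monomial n) (of_real \<sigma>) = of_nat n powr (- (of_nat c0 * of_real \<sigma> + \<psi> (of_real \<sigma>)))"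
      using comp_monomial(2)[OF n, of "of_real \<sigma>"] that by (simp add: \<phi> C0_def)
    ultimately show ?thesis
      by (simp add: powr_add[symmetric])
  qed
  then have "eventually (\<lambda>\<sigma>. of_nat n powr (- \<psi> (of_real \<sigma>)) =
      dir_eval (comp_monomial n) (of_real \<sigma>) * of_nat (n ^ c0) powr of_real \<sigma>) at_top"
    by (auto simp: eventually_at_top_dense)
  moreover have "((\<lambda>\<sigma>. of_nat n powr (- \<psi> (of_real \<sigma>))) \<longlongrightarrow> of_nat n powr (- \<beta>)) at_top"
    using n0 tendsto_\<beta> by (simp add: powr_def) (intro tendsto_intros)
  ultimately show "((\<lambda>\<sigma>. dir_eval (comp_monomial n) (of_real \<sigma>) * of_nat (n ^ c0) powr of_real \<sigma>)
      \<longlongrightarrow> of_nat n powr (- \<beta>)) at_top"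
    by (rule Lim_transform_eventually[rotated])
qed

lemma comp_monomial_disjoint:
  "smooth k n \<Longrightarrow> smooth k n' \<Longrightarrow> n \<noteq> n' \<Longrightarrow> comp_monomial n j = 0 \<or> comp_monomial n' j = 0"
  using comp_isometry_images_disjoint[OF isometry \<phi>_C0] comp_monomial by blast

lemma c0_ge_1: "c0 \<ge> 1"
proof (rule ccontr)
  assume "\<not> c0 \<ge> 1"
  then have "c0 = 0" by simp
  then have "comp_monomial 1 1 \<noteq> 0" "comp_monomial 2 1 \<noteq> 0"
    using comp_monomial_leading[OF smooth_1] comp_monomial_leading[OF smooth_2[OF k]]
    by (auto simp: of_nat_powr_nonzero)
  then show False
    using comp_monomial_disjoint[OF smooth_1 smooth_2[OF k]] by auto
qed

abbreviation q :: nat where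
  "q \<equiv> 2 ^ c0"

abbreviation B :: "nat \<Rightarrow> complex" where
  "B \<equiv> comp_monomial 2"

lemma B_in_Ak: "B \<in> Ak k"
  using comp_monomial(1)[OF smooth_2[OF k]] .

lemma dir_eval_B: "s \<in> C0 \<Longrightarrow> dir_eval B s = 2 powr (- \<phi> s)"
  using comp_monomial(2)[OF smooth_2[OF k]] by simp

lemma B_below: "j < q \<Longrightarrow> B j = 0"
  using comp_monomial_leading[OF smooth_2[OF k]] Ak_coeff_0[OF B_in_Ak] by (cases "j = 0") auto

lemma B_q: "B q = 2 powr (- \<beta>)"
  using comp_monomial_leading[OF smooth_2[OF k]] by simp

lemma Anorm_B: "Anorm B = 1"
  using comp_isometry_Anorm_image_monomial[OF isometry smooth_2[OF k] B_in_Ak] comp_monomial(2)[OF smooth_2[OF k]]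
  by simp

lemma dir_eval_comp_monomial_power_2: "s \<in> C0 \<Longrightarrow> dir_eval (comp_monomial (2 ^ m)) s = dir_eval B s ^ m"
  using comp_monomial(2)[OF smooth_power[OF smooth_2[OF k]]] dir_eval_B
  by (simp add: of_nat_power_powr[of 2, simplified])

lemma q_ge_2: "q \<ge> 2"
  using c0_ge_1 power_increasing[of 1 c0 "2::nat"] by simp

lemma B_q_nonzero: "B q \<noteq> 0"
  using B_q by (simp add: powr_def)

lemma dir_abs_summable_comp_monomial_power_2: "dir_abs_summable (comp_monomial (2 ^ j))"
  using comp_monomial(1)[OF smooth_power[OF smooth_2[OF k]]] by (rule Ak_imp_dir_abs_summable)

context
  assumes second_term: "\<exists>j. j \<noteq> q \<and> B j \<noteq> 0"
begin

definition r :: nat where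
  "r = (LEAST j. j \<noteq> q \<and> B j \<noteq> 0)"

lemma r_least: "j \<noteq> q \<Longrightarrow> j < r \<Longrightarrow> B j = 0"
  unfolding r_def using not_less_Least by blast

lemma r: "q < r" "B r \<noteq> 0"
proof -
  have "r \<noteq> q \<and> B r \<noteq> 0"
    unfolding r_def by (rule LeastI_ex[OF second_term])
  then show "q < r"
    using B_below by (metis linorder_neqE_nat)
  show "B r \<noteq> 0"
    using \<open>r \<noteq> q \<and> B r \<noteq> 0\<close> by simp
qed

lemma r_ge_1: "r \<ge> 1"
  using r(1) q_ge_2 by simp

lemma smooth_r: "smooth k r"
  using B_in_Ak r(2) by (auto simp: Ak_def)

definition E :: "nat \<Rightarrow> complex" where
  "E j = (if j = q then 0 else B j)"

lemma dir_abs_summable_E: "dir_abs_summable E"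
  using Ak_imp_dir_abs_summable[OF B_in_Ak] unfolding dir_abs_summable_def
  by (rule summable_comparison_test[rotated]) (auto simp: E_def)

lemma E_below: "1 \<le> j \<Longrightarrow> j < r \<Longrightarrow> E j = 0"
  using r_least by (auto simp: E_def)

lemma E_r: "E r = B r"
  using r(1) by (simp add: E_def)

lemma dir_eval_B_split: "Re s \<ge> 0 \<Longrightarrow> dir_eval B s = B q * of_nat q powr (- s) + dir_eval E s"
proof -
  assume s: "Re s \<ge> 0"
  have "B = (\<lambda>j. B q * dir_monomial q j + E j)"
    by (auto simp: E_def dir_monomial_def)
  then have "dir_eval B s = dir_eval (\<lambda>j. B q * dir_monomial q j + E j) s"
    by (rule arg_cong)
  also have "\<dots> = B q * of_nat q powr (- s) + dir_eval E s"
    using s by (simp add: dir_eval_add dir_eval_mult dir_abs_summable_mult dir_abs_summable_monomial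
        dir_abs_summable_E dir_eval_monomial)
  finally show ?thesis .
qed

text \<open>The coefficients of \<open>E(s)^i\<close>, written without Dirichlet convolution: expand
  \<open>(B(s) - B\<^sub>q q^(-s))^i\<close> binomially and use that \<open>B(s)^j = 2^(-j \<phi>(s))\<close> is the image of \<open>(2^j)^(-s)\<close>.\<close>
definition E_power :: "nat \<Rightarrow> nat \<Rightarrow> complex" where
  "E_power i N = (\<Sum>j\<le>i. of_nat (i choose j) * (- B q) ^ (i - j) * dir_shift (q ^ (i - j)) (comp_monomial (2 ^ j)) N)"

lemma dir_abs_summable_E_power: "dir_abs_summable (E_power i)"
  unfolding E_power_def using q_ge_2
  by (intro dir_abs_summable_sum dir_abs_summable_mult dir_abs_summable_shift
      dir_abs_summable_comp_monomial_power_2) auto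

lemma dir_eval_E_power: "s \<in> C0 \<Longrightarrow> dir_eval (E_power i) s = dir_eval E s ^ i"
proof -
  assume s: "s \<in> C0"
  then have s0: "Re s \<ge> 0" by (simp add: C0_def)
  have q0: "q ^ j \<noteq> 0" for j using q_ge_2 by simp
  have "dir_eval (E_power i) s =
      (\<Sum>j\<le>i. of_nat (i choose j) * (- B q) ^ (i - j) * (of_nat (q ^ (i - j)) powr (- s) * dir_eval B s ^ j))"
    unfolding E_power_def using s s0 q0
    by (simp add: dir_eval_sum dir_eval_mult dir_eval_shift dir_abs_summable_mult dir_abs_summable_shift
        dir_abs_summable_comp_monomial_power_2 dir_eval_comp_monomial_power_2)
  also have "\<dots> = (\<Sum>j\<le>i. of_nat (i choose j) * dir_eval B s ^ j * ((- B q) * of_nat q powr (- s)) ^ (i - j))"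
    by (simp only: of_nat_power_powr power_mult_distrib mult_ac)
  also have "\<dots> = (dir_eval B s + (- B q) * of_nat q powr (- s)) ^ i"
    by (rule binomial_ring[symmetric])
  also have "\<dots> = dir_eval E s ^ i"
    using s0 by (simp add: dir_eval_B_split)
  finally show ?thesis .
qed

lemma E_power_leading: "(\<forall>j. 1 \<le> j \<longrightarrow> j < r ^ i \<longrightarrow> E_power i j = 0) \<and> E_power i (r ^ i) = B r ^ i"
  using dir_eval_power_leading[OF dir_abs_summable_E dir_abs_summable_E_power r_ge_1 E_below, of i]
  by (simp add: dir_eval_E_power C0_def E_r)

definition B_power :: "nat \<Rightarrow> nat \<Rightarrow> complex" where
  "B_power m N = (\<Sum>i\<le>m. of_nat (m choose i) * B q ^ (m - i) * dir_shift (q ^ (m - i)) (E_power i) N)"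

lemma dir_abs_summable_B_power: "dir_abs_summable (B_power m)"
  unfolding B_power_def using q_ge_2
  by (intro dir_abs_summable_sum dir_abs_summable_mult dir_abs_summable_shift dir_abs_summable_E_power) auto

lemma dir_eval_B_power: "s \<in> C0 \<Longrightarrow> dir_eval (B_power m) s = dir_eval B s ^ m"
proof -
  assume s: "s \<in> C0"
  then have s0: "Re s \<ge> 0" by (simp add: C0_def)
  have q0: "q ^ j \<noteq> 0" for j using q_ge_2 by simp
  have "dir_eval (B_power m) s =
      (\<Sum>i\<le>m. of_nat (m choose i) * B q ^ (m - i) * (of_nat (q ^ (m - i)) powr (- s) * dir_eval E s ^ i))"
    unfolding B_power_def using s s0 q0
    by (simp add: dir_eval_sum dir_eval_mult dir_eval_shift dir_abs_summable_mult dir_abs_summable_shift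
        dir_abs_summable_E_power dir_eval_E_power)
  also have "\<dots> = (\<Sum>i\<le>m. of_nat (m choose i) * dir_eval E s ^ i * (B q * of_nat q powr (- s)) ^ (m - i))"
    by (simp only: of_nat_power_powr power_mult_distrib mult_ac)
  also have "\<dots> = (dir_eval E s + B q * of_nat q powr (- s)) ^ m"
    by (rule binomial_ring[symmetric])
  also have "\<dots> = dir_eval B s ^ m"
    using s0 by (simp add: dir_eval_B_split add.commute)
  finally show ?thesis .
qed

lemma comp_monomial_power_2_eq_B_power: "N \<ge> 1 \<Longrightarrow> comp_monomial (2 ^ m) N = B_power m N"
  by (rule dir_coeffs_eq[OF dir_abs_summable_comp_monomial_power_2 dir_abs_summable_B_power])
    (simp_all add: dir_eval_comp_monomial_power_2 dir_eval_B_power C0_def)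

lemma B_power_at_disjoint_index: "m \<ge> c0 \<Longrightarrow> B_power m (q ^ (m - c0) * r ^ c0) = 0"
proof -
  assume m: "m \<ge> c0"
  define n where "n = 2 ^ (m - c0) * r"
  have n: "smooth k n"
    unfolding n_def by (intro smooth_mult smooth_power smooth_2[OF k] smooth_r)
  have n_pow: "n ^ c0 = q ^ (m - c0) * r ^ c0"
    by (simp add: n_def power_mult_distrib flip: power_mult)
  have "n \<noteq> 2 ^ m"
  proof
    assume "n = 2 ^ m"
    then have "2 ^ (m - c0) * r = 2 ^ (m - c0) * q"
      using m by (simp add: n_def flip: power_add)
    then show False
      using r(1) by simp
  qed
  moreover have "comp_monomial n (n ^ c0) \<noteq> 0"
    using comp_monomial_leading[OF n] n by (simp add: of_nat_powr_nonzero smooth_def)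
  ultimately have "comp_monomial (2 ^ m) (n ^ c0) = 0"
    using comp_monomial_disjoint[OF n smooth_power[OF smooth_2[OF k]]] by blast
  moreover have "n ^ c0 \<ge> 1"
    using n by (simp add: smooth_def)
  ultimately show ?thesis
    using comp_monomial_power_2_eq_B_power n_pow by simp
qed

lemma B_power_at_index:
  assumes m: "m \<ge> c0"
  shows "B_power m (q ^ (m - c0) * r ^ c0) =
    (\<Sum>i\<le>c0. of_nat (m choose i) * B q ^ (m - i) * dir_shift (q ^ (c0 - i)) (E_power i) (r ^ c0))"
proof -
  have q0: "q ^ j \<noteq> 0" for j
    using q_ge_2 by simp
  have low: "dir_shift (q ^ (m - i)) (E_power i) (q ^ (m - c0) * r ^ c0) = dir_shift (q ^ (c0 - i)) (E_power i) (r ^ c0)"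
    if "i \<le> c0" for i
  proof -
    have "q ^ (m - i) = q ^ (m - c0) * q ^ (c0 - i)"
      using that m by (simp flip: power_add)
    then show ?thesis
      by (simp add: dir_shift_mult_mult q0)
  qed
  \<comment> \<open>for \<open>i > c0\<close> the index lies below the leading index \<open>r^i\<close> of \<open>E^i\<close>\<close>
  have high: "dir_shift (q ^ (m - i)) (E_power i) (q ^ (m - c0) * r ^ c0) = 0" if "c0 < i" "i \<le> m" for i
  proof -
    have idx: "q ^ (m - c0) * r ^ c0 = q ^ (m - i) * (q ^ (i - c0) * r ^ c0)"
      using that by (simp add: mult.assoc flip: power_add)
    have "q ^ (i - c0) * r ^ c0 < r ^ (i - c0) * r ^ c0"
      using that r(1) r_ge_1 by (intro mult_strict_right_mono power_strict_mono) auto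
    also have "\<dots> = r ^ i"
      using that by (simp flip: power_add)
    finally have "E_power i (q ^ (i - c0) * r ^ c0) = 0"
      using E_power_leading[of i] q_ge_2 r_ge_1 by simp
    then show ?thesis
      by (simp add: idx dir_shift_mult q0)
  qed
  show ?thesis
    unfolding B_power_def by (rule sum.mono_neutral_cong_right) (use m low high in auto)
qed

lemma second_term_impossible: False
proof -
  define y where "y i = dir_shift (q ^ (c0 - i)) (E_power i) (r ^ c0) / B q ^ i" for i
  have "(\<Sum>i\<le>c0. of_nat (m choose i) * y i) = 0" if m: "m \<ge> c0" for m
  proof -
    have "B q ^ m * (\<Sum>i\<le>c0. of_nat (m choose i) * y i) = B_power m (q ^ (m - c0) * r ^ c0)"
      unfolding B_power_at_index[OF m] sum_distrib_left
      using m B_q_nonzero by (intro sum.cong) (auto simp: y_def power_diff field_simps)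
    then show ?thesis
      using B_power_at_disjoint_index[OF m] B_q_nonzero by simp
  qed
  then have "y c0 = 0"
    using binomial_combination_eventually_zero by blast
  moreover have "y c0 = B r ^ c0 / B q ^ c0"
    using E_power_leading[of c0] by (simp add: y_def dir_shift_def)
  ultimately show False
    using r(2) B_q_nonzero by simp
qed

end

lemma B_monomial: "j \<noteq> q \<Longrightarrow> B j = 0"
  using second_term_impossible by blast

lemma B_eq_monomial: "B = (\<lambda>j. B q * dir_monomial q j)"
  using B_monomial by (auto simp: dir_monomial_def)

lemma Re_\<beta>: "Re \<beta> = 0"
proof -
  have "Anorm B = norm (B q)"
    by (subst B_eq_monomial) (simp add: Anorm_mult dir_abs_summable_monomial Anorm_monomial)
  then have "2 powr (- Re \<beta>) = (1::real)"
    using Anorm_B by (simp add: B_q norm_powr_real_powr)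
  then show ?thesis
    by simp
qed

lemma \<psi>_minus_\<beta>_Ints: "s \<in> C0 \<Longrightarrow> (\<psi> s - \<beta>) * Ln 2 / (2 * of_real pi * \<i>) \<in> \<int>"
proof -
  assume s: "s \<in> C0"
  have "2 powr (- \<phi> s) = dir_eval (\<lambda>j. B q * dir_monomial q j) s"
    using s by (simp flip: B_eq_monomial add: dir_eval_B)
  also have "\<dots> = B q * of_nat q powr (- s)"
    using s by (simp add: dir_eval_mult dir_abs_summable_monomial dir_eval_monomial C0_def)
  also have "\<dots> = 2 powr (- \<beta>) * 2 powr (of_nat c0 * (- s))"
    unfolding B_q of_nat_power_powr using of_nat_powr_of_nat_mult[of 2 c0 "- s"] by simp
  also have "\<dots> = 2 powr (- \<beta> + of_nat c0 * (- s))"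
    by (rule powr_add[symmetric])
  finally have "2 powr (- \<beta> + of_nat c0 * (- s)) = 2 powr (- \<phi> s)"
    by simp
  from powr_eq_powr_imp_Ints[OF _ this] show ?thesis
    by (simp add: \<phi> algebra_simps)
qed

lemma \<psi>_eq_\<beta>: "s \<in> C0 \<Longrightarrow> \<psi> s = \<beta>"
proof -
  define h where "h s = (\<psi> s - \<beta>) * Ln 2 / (2 * of_real pi * \<i>)" for s
  have "continuous_on C0 \<psi>"
    using \<psi> by (auto simp: Dk_def intro: holomorphic_on_imp_continuous_on)
  then have "continuous_on C0 h"
    unfolding h_def by (intro continuous_intros) auto
  then have "h constant_on C0"
    using \<psi>_minus_\<beta>_Ints by (intro continuous_on_Ints_valued_imp_constant_on) (auto simp: C0_def h_def)
  then obtain c where c: "\<And>s. s \<in> C0 \<Longrightarrow> h s = c"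
    by (auto simp: constant_on_def)
  have "((\<lambda>\<sigma>. h (of_real \<sigma>)) \<longlongrightarrow> (\<beta> - \<beta>) * Ln 2 / (2 * of_real pi * \<i>)) at_top"
    unfolding h_def by (intro tendsto_intros tendsto_\<beta>) auto
  moreover have "eventually (\<lambda>\<sigma>. h (of_real \<sigma>) = c) at_top"
    using eventually_gt_at_top[of 0] by eventually_elim (simp add: c C0_def)
  ultimately have "c = 0"
    using tendsto_unique[OF trivial_limit_at_top_linorder] tendsto_cong by fastforce
  then show "s \<in> C0 \<Longrightarrow> \<psi> s = \<beta>"
    using c by (simp add: h_def)
qed

lemma \<phi>_affine: "\<exists>\<tau>::real. \<forall>s\<in>C0. \<phi> s = of_nat c0 * s + \<i> * of_real \<tau>"
proof
  have "\<beta> = \<i> * of_real (Im \<beta>)"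
    using Re_\<beta> by (simp add: complex_eq_iff)
  then show "\<forall>s\<in>C0. \<phi> s = of_nat c0 * s + \<i> * of_real (Im \<beta>)"
    using \<psi>_eq_\<beta> by (simp add: \<phi>)
qed

end

theorem theorem23:
  fixes k c0 :: nat and \<psi> \<phi> :: "complex \<Rightarrow> complex"
  assumes "k \<ge> 1"
    and "\<psi> \<in> Dk k"
    and "\<phi> = (\<lambda>s. of_nat c0 * s + \<psi> s)"
    and "\<phi> holomorphic_on C0"
    and "\<phi> ` C0 \<subseteq> C0"
    and "\<not> (\<exists>c. \<forall>s\<in>C0. \<phi> s = c)"
    and "comp_maps_into k \<phi>"
  shows "comp_isometry k \<phi> \<longleftrightarrow>
           (c0 \<ge> 1 \<and> (\<exists>\<tau>::real. \<forall>s\<in>C0. \<phi> s = of_nat c0 * s + \<i> * of_real \<tau>))"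
proof
  assume "comp_isometry k \<phi>"
  then interpret isometric_comp k c0 \<psi> \<phi>
    using assms by unfold_locales auto
  show "c0 \<ge> 1 \<and> (\<exists>\<tau>::real. \<forall>s\<in>C0. \<phi> s = of_nat c0 * s + \<i> * of_real \<tau>)"
    using c0_ge_1 \<phi>_affine by blast
next
  assume "c0 \<ge> 1 \<and> (\<exists>\<tau>::real. \<forall>s\<in>C0. \<phi> s = of_nat c0 * s + \<i> * of_real \<tau>)"
  then show "comp_isometry k \<phi>"
    using comp_isometry_affine by blast
qed

end
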